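(* Let $\mathbf{a}=(a_n)_{n\geq 1}$ be a strong divisibility sequence. Then for every positive integer $n$, \[\mathrm{lcm}(a_1,a_2,\dots,a_n)=\mathrm{lcm}\left\{a_1\binom{n}{1}_{\mathbf{a}},a_2\binom{n}{2}_{\mathbf{a}},\dots,a_n\binom{n}{n}_{\mathbf{a}}\right\}.\]
   Context: A strong divisibility sequence is a sequence of positive integers $(a_n)_{n\geq1}$ such that $\gcd(a_n,a_m)=a_{\gcd(n,m)}$ for all positive integers $n,m$. For integers $0\leq k\leq n$, the $\mathbf{a}$-binomial coefficient is $\binom{n}{k}_{\mathbf{a}}:=\frac{a_na_{n-1}\cdots a_{n-k+1}}{a_1a_2\cdots a_k}$ (empty products equal $1$); for a strong divisibility sequence these are positive integers. *)

theory Defs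
  imports Main
begin

text \<open>A strong divisibility sequence (indexed from 1; the value at 0 is irrelevant).\<close>
definition strong_div_seq :: "(nat \<Rightarrow> nat) \<Rightarrow> bool" where
  "strong_div_seq a \<longleftrightarrow> (\<forall>n\<ge>1. a n > 0) \<and>
     (\<forall>n\<ge>1. \<forall>m\<ge>1. gcd (a n) (a m) = a (gcd n m))"

text \<open>The a-binomial coefficient: (a_n a_(n-1) ... a_(n-k+1)) / (a_1 ... a_k).
  For strong divisibility sequences the division is exact.\<close>
definition abinom :: "(nat \<Rightarrow> nat) \<Rightarrow> nat \<Rightarrow> nat \<Rightarrow> nat" where
  "abinom a n k = (\<Prod>i\<in>{n-k+1..n}. a i) div (\<Prod>i\<in>{1..k}. a i)"

end

theory Submission
  imports Defs "HOL-Computational_Algebra.Primes"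
begin

text \<open>Fix a prime power \<open>d = p ^ e\<close>. In a strong divisibility sequence the indices \<open>m\<close> with
  \<open>d dvd a m\<close> are exactly the multiples of the rank of apparition \<open>r\<close> of \<open>d\<close>. So \<open>d\<close> divides
  \<open>k div r\<close> of the terms \<open>a 1, \<dots>, a k\<close> and \<open>n div r - (n - k) div r\<close> of the terms
  \<open>a (n-k+1), \<dots>, a n\<close>; the second count exceeds the first by at most one, and by nothing when
  \<open>r dvd k\<close>, i.e. when \<open>d dvd a k\<close>. Summing over \<open>e\<close> (a Legendre-type formula for
  multiplicities) shows that the \<open>a\<close>-binomial coefficient is integral and that the multiplicity of
  \<open>p\<close> in \<open>a k\<close> times it is at most \<open>max (i \<le> n). multiplicity p (a i)\<close>, the multiplicity of \<open>p\<close>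
  in the lcm. The other divisibility is trivial.\<close>

lemma card_multiples_atLeastAtMost:
  fixes r m :: nat
  assumes "r > 0"
  shows "card {i \<in> {1..m}. r dvd i} = m div r"
proof -
  have "{i \<in> {1..m}. r dvd i} = (\<lambda>t. r * t) ` {1..m div r}"
  proof (intro set_eqI iffI)
    fix i assume "i \<in> {i \<in> {1..m}. r dvd i}"
    then obtain t where t: "i = r * t" "1 \<le> r * t" "r * t \<le> m"
      by auto
    then have "t \<in> {1..m div r}"
      using assms by (auto simp: less_eq_div_iff_mult_less_eq mult.commute intro: Suc_leI)
    with t(1) show "i \<in> (\<lambda>t. r * t) ` {1..m div r}"
      by blast
  next
    fix i assume "i \<in> (\<lambda>t. r * t) ` {1..m div r}"
    then obtain t where t: "i = r * t" "t \<in> {1..m div r}"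
      by (rule imageE)
    then have "r * t \<le> m"
      using assms by (simp add: less_eq_div_iff_mult_less_eq mult.commute)
    moreover have "1 \<le> r * t"
      using assms t(2) by auto
    ultimately show "i \<in> {i \<in> {1..m}. r dvd i}"
      using t(1) by simp
  qed
  then show ?thesis
    using assms by (simp add: card_image inj_on_def)
qed

lemma card_multiples_window:
  fixes r k n :: nat
  assumes "r > 0" "k \<le> n"
  shows "card {i \<in> {n-k+1..n}. r dvd i} = n div r - (n - k) div r"
proof -
  have "{i \<in> {1..n}. r dvd i} = {i \<in> {1..n-k}. r dvd i} \<union> {i \<in> {n-k+1..n}. r dvd i}"
    by auto
  then have "card {i \<in> {1..n}. r dvd i} = card {i \<in> {1..n-k}. r dvd i} + card {i \<in> {n-k+1..n}. r dvd i}"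
    by (simp add: card_Un_disjoint disjoint_iff)
  then show ?thesis
    unfolding card_multiples_atLeastAtMost[OF assms(1)] by simp
qed

lemma div_diff_bounds:
  fixes r k n :: nat
  assumes "r > 0" "k \<le> n"
  shows "k div r \<le> n div r - (n - k) div r"
    and "n div r - (n - k) div r \<le> k div r + 1"
    and "r dvd k \<Longrightarrow> n div r - (n - k) div r = k div r"
proof -
  have n: "n = (n - k) + k"
    using assms(2) by simp
  have carry: "n div r = (n - k) div r + k div r + ((n - k) mod r + k mod r) div r"
    by (subst n) (rule div_add1_eq)
  have "(n - k) mod r + k mod r < 2 * r"
    using assms(1) mod_less_divisor[of r "n - k"] mod_less_divisor[of r k] by linarith
  then have "((n - k) mod r + k mod r) div r < 2"
    using assms(1) by (simp add: div_less_iff_less_mult mult.commute)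
  with carry show "k div r \<le> n div r - (n - k) div r" "n div r - (n - k) div r \<le> k div r + 1"
    by linarith+
  assume "r dvd k"
  then show "n div r - (n - k) div r = k div r"
    using carry assms(1) by simp
qed

lemma strong_div_seq_dvd:
  assumes "strong_div_seq a" "r \<ge> 1" "m \<ge> 1" "r dvd m"
  shows "a r dvd a m"
proof -
  have "gcd (a r) (a m) = a (gcd r m)"
    using assms(1-3) unfolding strong_div_seq_def by blast
  also have "gcd r m = r"
    using assms(4) by (simp add: gcd_nat.absorb1)
  finally show ?thesis
    by (metis gcd_dvd2)
qed

text \<open>The witness is the rank of apparition, the least \<open>r \<ge> 1\<close> with \<open>d dvd a r\<close>: if also
  \<open>d dvd a m\<close>, then \<open>d\<close> divides \<open>gcd (a r) (a m) = a (gcd r m)\<close>, so minimality forces \<open>r dvd m\<close>.\<close>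

lemma strong_div_seq_rank:
  assumes sds: "strong_div_seq a" and "i \<ge> 1" "d dvd a i"
  obtains r where "r \<ge> 1" "\<And>m. m \<ge> 1 \<Longrightarrow> d dvd a m \<longleftrightarrow> r dvd m"
proof -
  define r where "r = (LEAST i. 1 \<le> i \<and> d dvd a i)"
  have r: "1 \<le> r" "d dvd a r"
    unfolding r_def using LeastI[of "\<lambda>i. 1 \<le> i \<and> d dvd a i" i] assms(2,3) by auto
  have "d dvd a m \<longleftrightarrow> r dvd m" if m: "m \<ge> 1" for m
  proof
    assume "d dvd a m"
    with r have "d dvd a (gcd r m)"
      using sds m unfolding strong_div_seq_def by (metis gcd_greatest)
    moreover have "1 \<le> gcd r m"
      using m by (simp add: Suc_le_eq)
    ultimately have "r \<le> gcd r m"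
      unfolding r_def by (blast intro: Least_le)
    with r(1) have "gcd r m = r"
      by (simp add: antisym gcd_le1_nat)
    then show "r dvd m"
      by (metis gcd_dvd2)
  next
    assume "r dvd m"
    then show "d dvd a m"
      using strong_div_seq_dvd[OF sds r(1) m] r(2) dvd_trans by blast
  qed
  with r(1) show thesis
    by (rule that)
qed

text \<open>Via the rank of apparition \<open>r\<close> of \<open>d\<close>, \<open>upper = n div r - (n - k) div r\<close> and
  \<open>lower = k div r\<close>; if no term is divisible by \<open>d\<close> both are zero.\<close>

lemma strong_div_seq_window_count:
  fixes a :: "nat \<Rightarrow> nat" and d k n :: nat
  assumes sds: "strong_div_seq a" and "k \<le> n"
  defines "upper \<equiv> card {i \<in> {n-k+1..n}. d dvd a i}"
      and "lower \<equiv> card {i \<in> {1..k}. d dvd a i}"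
  shows "lower \<le> upper" and "upper \<le> lower + 1" and "k \<ge> 1 \<Longrightarrow> d dvd a k \<Longrightarrow> upper = lower"
proof -
  have "lower \<le> upper \<and> upper \<le> lower + 1 \<and> (k \<ge> 1 \<longrightarrow> d dvd a k \<longrightarrow> upper = lower)"
  proof (cases "\<exists>i\<ge>1. d dvd a i")
    case True
    then obtain i where "i \<ge> 1" "d dvd a i"
      by blast
    then obtain r where r: "r \<ge> 1" "\<And>m. m \<ge> 1 \<Longrightarrow> d dvd a m \<longleftrightarrow> r dvd m"
      using strong_div_seq_rank[OF sds] by blast
    have "{i \<in> {n-k+1..n}. d dvd a i} = {i \<in> {n-k+1..n}. r dvd i}"
         "{i \<in> {1..k}. d dvd a i} = {i \<in> {1..k}. r dvd i}"
      using r(2) by auto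
    then have "upper = n div r - (n - k) div r" "lower = k div r"
      unfolding upper_def lower_def
      using card_multiples_window[of r k n] card_multiples_atLeastAtMost[of r k] r(1) \<open>k \<le> n\<close>
      by simp_all
    then show ?thesis
      using div_diff_bounds[of r k n] r \<open>k \<le> n\<close> by auto
  next
    case False
    then have "upper = 0" "lower = 0"
      unfolding upper_def lower_def by auto
    with False show ?thesis
      by auto
  qed
  then show "lower \<le> upper" "upper \<le> lower + 1" "k \<ge> 1 \<Longrightarrow> d dvd a k \<Longrightarrow> upper = lower"
    by auto
qed

lemma multiplicity_prod_eq_sum_card_dvd:
  fixes f :: "'a \<Rightarrow> nat"
  assumes "prime p" "finite A" "\<And>i. i \<in> A \<Longrightarrow> f i \<noteq> 0"
      and "\<And>i. i \<in> A \<Longrightarrow> multiplicity p (f i) \<le> B"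
  shows "multiplicity p (\<Prod>i\<in>A. f i) = (\<Sum>e\<in>{1..B}. card {i \<in> A. p ^ e dvd f i})"
proof -
  have not_unit: "\<not> is_unit p"
    using assms(1) not_prime_unit by blast
  have multiplicity_eq: "multiplicity p (f i) = (\<Sum>e\<in>{1..B}. of_bool (p ^ e dvd f i))" if "i \<in> A" for i
  proof -
    have "{1..B} \<inter> {e. p ^ e dvd f i} = {1..multiplicity p (f i)}"
      using assms(3,4)[OF that] power_dvd_iff_le_multiplicity[OF _ not_unit] by auto
    then show ?thesis
      by (simp add: sum_of_bool_eq)
  qed
  have "0 \<notin> f ` A"
    using assms(3) by (metis imageE)
  then have "multiplicity p (\<Prod>i\<in>A. f i) = (\<Sum>i\<in>A. multiplicity p (f i))"
    using assms(1,2) by (simp add: prime_elem_multiplicity_prod_distrib)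
  also have "\<dots> = (\<Sum>i\<in>A. \<Sum>e\<in>{1..B}. of_bool (p ^ e dvd f i))"
    using multiplicity_eq by (rule sum.cong[OF refl])
  also have "\<dots> = (\<Sum>e\<in>{1..B}. \<Sum>i\<in>A. of_bool (p ^ e dvd f i))"
    by (rule sum.swap)
  also have "\<dots> = (\<Sum>e\<in>{1..B}. card {i \<in> A. p ^ e dvd f i})"
    using assms(2) by (simp add: sum_of_bool_eq Int_def)
  finally show ?thesis .
qed

lemma strong_div_seq_pos:
  assumes "strong_div_seq a" "i \<ge> 1"
  shows "a i > 0"
  using assms unfolding strong_div_seq_def by blast

lemma strong_div_seq_multiplicity_window:
  fixes a :: "nat \<Rightarrow> nat" and k n p B :: nat
  assumes sds: "strong_div_seq a" and "k \<le> n" and p: "prime p"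
      and bound: "\<And>i. i \<in> {1..n} \<Longrightarrow> multiplicity p (a i) \<le> B"
  shows "multiplicity p (\<Prod>i\<in>{1..k}. a i) \<le> multiplicity p (\<Prod>i\<in>{n-k+1..n}. a i)"
    and "k \<ge> 1 \<Longrightarrow> multiplicity p (a k) + multiplicity p (\<Prod>i\<in>{n-k+1..n}. a i)
           \<le> multiplicity p (\<Prod>i\<in>{1..k}. a i) + B"
proof -
  define count where "count S e = card {i \<in> S. p ^ e dvd a i}" for S e
  have multiplicity_prod: "multiplicity p (\<Prod>i\<in>S. a i) = (\<Sum>e\<in>{1..B}. count S e)"
    if "S \<subseteq> {1..n}" for S
    unfolding count_def
    using that finite_subset[OF that] strong_div_seq_pos[OF sds] bound
    by (intro multiplicity_prod_eq_sum_card_dvd[OF p]) fastforce+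
  have lower: "{1..k} \<subseteq> {1..n}" and upper: "{n-k+1..n} \<subseteq> {1..n}"
    using \<open>k \<le> n\<close> by auto
  show "multiplicity p (\<Prod>i\<in>{1..k}. a i) \<le> multiplicity p (\<Prod>i\<in>{n-k+1..n}. a i)"
    unfolding multiplicity_prod[OF lower] multiplicity_prod[OF upper] count_def
    using strong_div_seq_window_count(1)[OF sds \<open>k \<le> n\<close>] by (rule sum_mono)
  assume "k \<ge> 1"
  then have single: "{k} \<subseteq> {1..n}"
    using \<open>k \<le> n\<close> by simp
  have "count {k} e + count {n-k+1..n} e \<le> count {1..k} e + 1" for e
  proof -
    have "{i \<in> {k}. p ^ e dvd a i} = (if p ^ e dvd a k then {k} else {})"
      by auto
    then have "count {k} e = of_bool (p ^ e dvd a k)"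
      unfolding count_def by simp
    then show ?thesis
      using strong_div_seq_window_count(2,3)[OF sds \<open>k \<le> n\<close>, of "p ^ e", folded count_def]
        \<open>k \<ge> 1\<close>
      by (cases "p ^ e dvd a k") auto
  qed
  then have "(\<Sum>e\<in>{1..B}. count {k} e + count {n-k+1..n} e) \<le> (\<Sum>e\<in>{1..B}. count {1..k} e + 1)"
    by (rule sum_mono)
  then show "multiplicity p (a k) + multiplicity p (\<Prod>i\<in>{n-k+1..n}. a i)
      \<le> multiplicity p (\<Prod>i\<in>{1..k}. a i) + B"
    unfolding sum.distrib multiplicity_prod[OF lower] multiplicity_prod[OF upper]
    using multiplicity_prod[OF single] by simp
qed

lemma strong_div_seq_multiplicity_le_Lcm:
  assumes "strong_div_seq a" "i \<in> {1..n}"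
  shows "multiplicity p (a i) \<le> multiplicity p (Lcm (a ` {1..n}))"
proof (rule dvd_imp_multiplicity_le)
  show "a i dvd Lcm (a ` {1..n})"
    using assms(2) by (simp add: dvd_Lcm)
  show "Lcm (a ` {1..n}) \<noteq> 0"
    using strong_div_seq_pos[OF assms(1)] by (auto simp: Lcm_0_iff_nat image_iff)
qed

lemma strong_div_seq_prod_dvd_prod_window:
  assumes "strong_div_seq a" "k \<le> n"
  shows "(\<Prod>i\<in>{1..k}. a i) dvd (\<Prod>i\<in>{n-k+1..n}. a i)"
proof (rule multiplicity_le_imp_dvd)
  show "(\<Prod>i\<in>{1..k}. a i) \<noteq> 0"
    using strong_div_seq_pos[OF assms(1)] by auto
  fix p :: nat
  assume "prime p"
  with assms show "multiplicity p (\<Prod>i\<in>{1..k}. a i) \<le> multiplicity p (\<Prod>i\<in>{n-k+1..n}. a i)"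
    by (intro strong_div_seq_multiplicity_window(1)[where B = "multiplicity p (Lcm (a ` {1..n}))"]
        strong_div_seq_multiplicity_le_Lcm)
qed

lemma strong_div_seq_abinom_mult:
  assumes "strong_div_seq a" "k \<le> n"
  shows "(\<Prod>i\<in>{1..k}. a i) * abinom a n k = (\<Prod>i\<in>{n-k+1..n}. a i)"
  using strong_div_seq_prod_dvd_prod_window[OF assms] unfolding abinom_def by simp

lemma strong_div_seq_mult_abinom_dvd_Lcm:
  assumes sds: "strong_div_seq a" and k: "k \<in> {1..n}"
  shows "a k * abinom a n k dvd Lcm (a ` {1..n})"
proof (rule multiplicity_le_imp_dvd)
  have window: "(\<Prod>i\<in>{1..k}. a i) * abinom a n k = (\<Prod>i\<in>{n-k+1..n}. a i)"
    using strong_div_seq_abinom_mult[OF sds] k by simp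
  have "(\<Prod>i\<in>{1..k}. a i) \<noteq> 0" "(\<Prod>i\<in>{n-k+1..n}. a i) \<noteq> 0" "a k \<noteq> 0"
    using strong_div_seq_pos[OF sds] k by auto
  with window have nonzero: "(\<Prod>i\<in>{1..k}. a i) \<noteq> 0" "abinom a n k \<noteq> 0" "a k \<noteq> 0"
    by (metis mult_0_right)+
  then show "a k * abinom a n k \<noteq> 0"
    by simp
  fix p :: nat
  assume p: "prime p"
  have "multiplicity p (a k) + multiplicity p (\<Prod>i\<in>{n-k+1..n}. a i)
      \<le> multiplicity p (\<Prod>i\<in>{1..k}. a i) + multiplicity p (Lcm (a ` {1..n}))"
    using k by (intro strong_div_seq_multiplicity_window(2)[OF sds _ p]
        strong_div_seq_multiplicity_le_Lcm[OF sds]) auto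
  then show "multiplicity p (a k * abinom a n k) \<le> multiplicity p (Lcm (a ` {1..n}))"
    unfolding window[symmetric] using nonzero p by (simp add: prime_elem_multiplicity_mult_distrib)
qed

theorem corollary1:
  fixes a :: "nat \<Rightarrow> nat" and n :: nat
  assumes "strong_div_seq a" and "n \<ge> 1"
  shows "Lcm (a ` {1..n}) = Lcm ((\<lambda>k. a k * abinom a n k) ` {1..n})"
proof (rule dvd_antisym)
  show "Lcm (a ` {1..n}) dvd Lcm ((\<lambda>k. a k * abinom a n k) ` {1..n})"
    by (rule Lcm_least) (auto intro: dvd_mult_left dvd_Lcm)
  show "Lcm ((\<lambda>k. a k * abinom a n k) ` {1..n}) dvd Lcm (a ` {1..n})"
    using strong_div_seq_mult_abinom_dvd_Lcm[OF assms(1)] by (auto intro: Lcm_least)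
qed

end
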